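(* Let $\Theta_n$ be a parameter space with norm $\|\cdot\|$, let ${\boldsymbol X}_n$ denote data of sample size $n$, and for $t=1,\ldots,T$ let $Q_t(\theta,{\boldsymbol X}_n)$ be random functions of $\theta\in\Theta_n$. Suppose: (B1) for each $t$, $Q_t(\theta,{\boldsymbol X}_n)$ is continuous in $\theta$, and there is a function $Q_t^*(\theta)$, continuous in $\theta$ and uniquely maximized at $\theta_*^{(t)}$; (B2) for any $\epsilon>0$, $\sup_{\theta\in\Theta_n\setminus B_t(\epsilon)}Q_t^*(\theta)$ exists, where $B_t(\epsilon)=\{\theta:\|\theta-\theta_*^{(t)}\|<\epsilon\}$, and with $\delta_t=Q_t^*(\theta_*^{(t)})-\sup_{\theta\in\Theta_n\setminus B_t(\epsilon)}Q_t^*(\theta)$ one has $\delta=\min_{1\le t\le T}\delta_t>0$; (B3) $\sup_{1\le t\le T}\sup_{\theta\in\Theta_n}|Q_t(\theta,{\boldsymbol X}_n)-Q_t^*(\theta)|\to_p0$ as $n\to\infty$; (B4) the penalty function $P_{\lambda_n}(\theta)$ is non-negative and converges to $0$ uniformly over the set $\{\theta_*^{(t)}:t=1,\ldots,T\}$ as $n\to\infty$, where $\lambda_n$ is a regularization parameter possibly depending on $n$. Let $\theta_n^{(t)}=\arg\max_{\theta\in\Theta_n}\{Q_t(\theta,{\boldsymbol X}_n)-P_{\lambda_n}(\theta)\}$. Then $\sup_{1\le t\le T}\|\theta_n^{(t)}-\theta_*^{(t)}\|\to_p0$. *)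

theory Defs
  imports "HOL-Probability.Probability"
begin

text \<open>For measurable events this is just
  prob (A n) tending to 0.  Used to express "sup ... ->_p 0" without
  measurability assumptions on suprema over uncountable index sets.\<close>
definition outer_prob_vanishes :: "'m measure \<Rightarrow> (nat \<Rightarrow> 'm set) \<Rightarrow> bool" where
  "outer_prob_vanishes M A \<longleftrightarrow>
     (\<forall>\<eta>>0. eventually (\<lambda>n. \<exists>B\<in>sets M. A n \<inter> space M \<subseteq> B \<and> measure M B < \<eta>) sequentially)"

end

theory Submission
  imports Defs
begin

(* If an estimate maximizes the penalized criterion Q - P while lying at distance at least
   \<epsilon> from \<theta>*, the separation (B2) forces Q* to drop by some \<delta> there; comparing with the
   value at \<theta>*, where the penalty is eventually below \<delta>/3, shows that Q must deviate from
   Q* by more than \<delta>/3 somewhere. So the bad event is eventually contained in the event of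
   (B3), whose outer probability vanishes. *)

lemma outer_prob_vanishes_subset:
  assumes "outer_prob_vanishes M B"
    and "eventually (\<lambda>n. A n \<inter> space M \<subseteq> B n) sequentially"
  shows "outer_prob_vanishes M A"
  unfolding outer_prob_vanishes_def
proof (intro allI impI)
  fix \<eta> :: real assume "\<eta> > 0"
  with assms(1) have "eventually (\<lambda>n. \<exists>C\<in>sets M. B n \<inter> space M \<subseteq> C \<and> measure M C < \<eta>) sequentially"
    unfolding outer_prob_vanishes_def by blast
  with assms(2) show "eventually (\<lambda>n. \<exists>C\<in>sets M. A n \<inter> space M \<subseteq> C \<and> measure M C < \<eta>) sequentially"
    by eventually_elim blast
qed

lemma penalized_argmax_deviation:
  fixes q qs p :: "'a \<Rightarrow> real"
  assumes "\<theta> \<in> S" and "x \<in> S"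
    and "q \<theta> - p \<theta> \<le> q x - p x" and "p x \<ge> 0" and "p \<theta> < \<delta>/3"
    and "qs x \<le> qs \<theta> - \<delta>"
  shows "\<exists>y\<in>S. \<bar>q y - qs y\<bar> > \<delta>/3"
proof (rule ccontr)
  assume "\<not> ?thesis"
  then have "\<bar>q x - qs x\<bar> \<le> \<delta>/3" and "\<bar>q \<theta> - qs \<theta>\<bar> \<le> \<delta>/3"
    using assms(1,2) by (auto simp: not_less)
  with assms(3-6) show False by (simp only: abs_le_iff) linarith
qed

theorem lemma1:
  fixes M :: "'m measure"
    and T :: nat
    and Theta :: "nat \<Rightarrow> 'a::real_normed_vector set"
    and Q :: "nat \<Rightarrow> nat \<Rightarrow> 'a \<Rightarrow> 'm \<Rightarrow> real"
    and Qs :: "nat \<Rightarrow> 'a \<Rightarrow> real"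
    and thstar :: "nat \<Rightarrow> 'a"
    and P :: "nat \<Rightarrow> 'a \<Rightarrow> real"
    and thn :: "nat \<Rightarrow> nat \<Rightarrow> 'm \<Rightarrow> 'a"
  assumes prob: "prob_space M"
    and T: "T \<ge> 1"
    and B1_Q_cont: "\<And>n t \<omega>. t \<in> {1..T} \<Longrightarrow> \<omega> \<in> space M \<Longrightarrow>
                       continuous_on (Theta n) (\<lambda>\<theta>. Q n t \<theta> \<omega>)"
    and B1_Qs_cont: "\<And>n t. t \<in> {1..T} \<Longrightarrow> continuous_on (Theta n) (Qs t)"
    and B1_in: "\<And>n t. t \<in> {1..T} \<Longrightarrow> thstar t \<in> Theta n"
    and B1_unique: "\<And>n t \<theta>. t \<in> {1..T} \<Longrightarrow> \<theta> \<in> Theta n \<Longrightarrow> \<theta> \<noteq> thstar t \<Longrightarrow>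
                       Qs t \<theta> < Qs t (thstar t)"
    and B2: "\<And>\<epsilon>. \<epsilon> > 0 \<Longrightarrow> \<exists>\<delta>>0. \<forall>n. \<forall>t\<in>{1..T}.
                \<forall>\<theta>\<in>Theta n - ball (thstar t) \<epsilon>. Qs t \<theta> \<le> Qs t (thstar t) - \<delta>"
    and B3: "\<And>\<epsilon>. \<epsilon> > 0 \<Longrightarrow> outer_prob_vanishes M
                (\<lambda>n. {\<omega>\<in>space M. \<exists>t\<in>{1..T}. \<exists>\<theta>\<in>Theta n. \<bar>Q n t \<theta> \<omega> - Qs t \<theta>\<bar> > \<epsilon>})"
    and B4_nonneg: "\<And>n \<theta>. P n \<theta> \<ge> 0"
    and B4_lim: "\<And>e. e > 0 \<Longrightarrow> eventually (\<lambda>n. \<forall>t\<in>{1..T}. \<bar>P n (thstar t)\<bar> < e) sequentially"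
    and argmax_in: "\<And>n t \<omega>. t \<in> {1..T} \<Longrightarrow> \<omega> \<in> space M \<Longrightarrow> thn n t \<omega> \<in> Theta n"
    and argmax: "\<And>n t \<omega> \<theta>. t \<in> {1..T} \<Longrightarrow> \<omega> \<in> space M \<Longrightarrow> \<theta> \<in> Theta n \<Longrightarrow>
                   Q n t \<theta> \<omega> - P n \<theta> \<le> Q n t (thn n t \<omega>) \<omega> - P n (thn n t \<omega>)"
  shows "\<And>\<epsilon>. \<epsilon> > 0 \<Longrightarrow> outer_prob_vanishes M
           (\<lambda>n. {\<omega>\<in>space M. \<exists>t\<in>{1..T}. norm (thn n t \<omega> - thstar t) > \<epsilon>})"
proof -
  fix \<epsilon> :: real assume "\<epsilon> > 0"
  obtain \<delta> where "\<delta> > 0" and separated: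
    "\<And>n t \<theta>. t \<in> {1..T} \<Longrightarrow> \<theta> \<in> Theta n - ball (thstar t) \<epsilon> \<Longrightarrow> Qs t \<theta> \<le> Qs t (thstar t) - \<delta>"
    using B2[OF \<open>\<epsilon> > 0\<close>] by blast
  have bad_event_subset: "{\<omega>\<in>space M. \<exists>t\<in>{1..T}. norm (thn n t \<omega> - thstar t) > \<epsilon>} \<inter> space M
      \<subseteq> {\<omega>\<in>space M. \<exists>t\<in>{1..T}. \<exists>\<theta>\<in>Theta n. \<bar>Q n t \<theta> \<omega> - Qs t \<theta>\<bar> > \<delta>/3}"
    if small_penalty: "\<forall>t\<in>{1..T}. \<bar>P n (thstar t)\<bar> < \<delta>/3" for n
  proof clarify
    fix \<omega> t assume \<omega>: "\<omega> \<in> space M" and t: "t \<in> {1..T}" and far: "norm (thn n t \<omega> - thstar t) > \<epsilon>"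
    have in_Theta: "thn n t \<omega> \<in> Theta n" "thstar t \<in> Theta n"
      using argmax_in[OF t \<omega>] B1_in[OF t] .
    show "\<exists>t\<in>{1..T}. \<exists>\<theta>\<in>Theta n. \<bar>Q n t \<theta> \<omega> - Qs t \<theta>\<bar> > \<delta>/3"
    proof (rule bexI[OF _ t], rule penalized_argmax_deviation[where q = "\<lambda>\<theta>. Q n t \<theta> \<omega>" and p = "P n"])
      show "Q n t (thstar t) \<omega> - P n (thstar t) \<le> Q n t (thn n t \<omega>) \<omega> - P n (thn n t \<omega>)"
        using argmax[OF t \<omega> B1_in[OF t]] .
      show "P n (thstar t) < \<delta>/3" using small_penalty t by fastforce
      show "Qs t (thn n t \<omega>) \<le> Qs t (thstar t) - \<delta>"
        using far in_Theta by (intro separated[OF t]) (simp add: dist_norm norm_minus_commute)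
    qed (use in_Theta B4_nonneg in auto)
  qed
  have "eventually (\<lambda>n. \<forall>t\<in>{1..T}. \<bar>P n (thstar t)\<bar> < \<delta>/3) sequentially"
    using B4_lim[of "\<delta>/3"] \<open>\<delta> > 0\<close> by simp
  then have "eventually (\<lambda>n. {\<omega>\<in>space M. \<exists>t\<in>{1..T}. norm (thn n t \<omega> - thstar t) > \<epsilon>} \<inter> space M
      \<subseteq> {\<omega>\<in>space M. \<exists>t\<in>{1..T}. \<exists>\<theta>\<in>Theta n. \<bar>Q n t \<theta> \<omega> - Qs t \<theta>\<bar> > \<delta>/3}) sequentially"
    by (rule eventually_mono) (rule bad_event_subset)
  moreover have "outer_prob_vanishes M
      (\<lambda>n. {\<omega>\<in>space M. \<exists>t\<in>{1..T}. \<exists>\<theta>\<in>Theta n. \<bar>Q n t \<theta> \<omega> - Qs t \<theta>\<bar> > \<delta>/3})"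
    using B3[of "\<delta>/3"] \<open>\<delta> > 0\<close> by simp
  ultimately show "outer_prob_vanishes M (\<lambda>n. {\<omega>\<in>space M. \<exists>t\<in>{1..T}. norm (thn n t \<omega> - thstar t) > \<epsilon>})"
    by (rule outer_prob_vanishes_subset[rotated])
qed

end
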